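(* Assume (A1) and (A2). Then there exists a constant $c>0$ such that for any $x,x'\in\mathbb S_+^{d-1}$ and $n\geqslant1$, \[ \mathbb E|S_n^x-S_n^{x'}|\leqslant\mathbb E^{1/2}\big[|S_n^x-S_n^{x'}|^2\big]\leqslant c\,\mathbf d(x,x') \] and \[ \mathbb E\Big[\Big|\min_{1\leqslant j\leqslant n}S_j^x-\min_{1\leqslant j\leqslant n}S_j^{x'}\Big|\Big]\leqslant\mathbb E^{1/2}\Big[\Big|\min_{1\leqslant j\leqslant n}S_j^x-\min_{1\leqslant j\leqslant n}S_j^{x'}\Big|^2\Big]\leqslant c\,\mathbf d(x,x'). \]
   Context: Let $d\geqslant2$, $|x|=\sum_i|\langle x,e_i\rangle|$, $\mathbb S_+^{d-1}=\{x\in\mathbb R_+^d:|x|=1\}$. $\mathcal M_+$: $d\times d$ allowable matrices (nonnegative, each row and column has a positive entry); $\mathcal M_+^\circ$: strictly positive matrices. $\|g\|=\sup_{x\in\mathbb S_+^{d-1}}|gx|$, $\iota(g)=\inf_{x\in\mathbb S_+^{d-1}}|gx|$, $N(g)=\max\{\|g\|,\iota(g)^{-1}\}$. $(g_n)$ i.i.d. with law $\mu$; $S_n^x=\log|g_n\cdots g_1x|$. (A1) $\mathbb P(\bigcup_n\{g_n\cdots g_1\in\mathcal M_+^\circ\})>0$. (A2) $\int(\log N(g))^{2+\delta}\mu(dg)<\infty$ for some $\delta>0$. Hilbert metric $\mathbf d(x,x')=\frac{1-m(x,x')m(x',x)}{1+m(x,x')m(x',x)}$, $m(x,x')=\min_i\langle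 x,e_i\rangle/\langle x',e_i\rangle$. *)

theory Defs
  imports "HOL-Probability.Probability"
begin

definition l1 :: "real ^ 'n \<Rightarrow> real" where
  "l1 x = (\<Sum>i\<in>UNIV. \<bar>x $ i\<bar>)"

definition pos_sphere :: "(real ^ 'n) set" where
  "pos_sphere = {x. (\<forall>i. 0 \<le> x $ i) \<and> l1 x = 1}"

definition allowable :: "real ^ 'n ^ 'n \<Rightarrow> bool" where
  "allowable g \<longleftrightarrow> (\<forall>i j. 0 \<le> g $ i $ j)
     \<and> (\<forall>i. \<exists>j. 0 < g $ i $ j) \<and> (\<forall>j. \<exists>i. 0 < g $ i $ j)"

definition strictly_positive :: "real ^ 'n ^ 'n \<Rightarrow> bool" where
  "strictly_positive g \<longleftrightarrow> (\<forall>i j. 0 < g $ i $ j)"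

definition mnorm :: "real ^ 'n ^ 'n \<Rightarrow> real" where
  "mnorm g = (SUP x\<in>pos_sphere. l1 (g *v x))"

definition iota :: "real ^ 'n ^ 'n \<Rightarrow> real" where
  "iota g = (INF x\<in>pos_sphere. l1 (g *v x))"

definition NN :: "real ^ 'n ^ 'n \<Rightarrow> real" where
  "NN g = max (mnorm g) (inverse (iota g))"

text \<open>Left product g (n-1) ** ... ** g 0 (the paper's g_n ... g_1, with g_k indexed from 0).\<close>
fun lprod :: "(nat \<Rightarrow> real ^ 'n ^ 'n) \<Rightarrow> nat \<Rightarrow> real ^ 'n ^ 'n" where
  "lprod g 0 = mat 1"
| "lprod g (Suc n) = g n ** lprod g n"

text \<open>m(x,y) = sup{lambda : lambda y <= x} = min over i with y_i > 0 of x_i / y_i.\<close>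
definition mratio :: "real ^ 'n \<Rightarrow> real ^ 'n \<Rightarrow> real" where
  "mratio x y = Min {x $ i / y $ i | i. 0 < y $ i}"

definition hdist :: "real ^ 'n \<Rightarrow> real ^ 'n \<Rightarrow> real" where
  "hdist x y = (1 - mratio x y * mratio y x) / (1 + mratio x y * mratio y x)"

definition Slog :: "(nat \<Rightarrow> real ^ 'n ^ 'n) \<Rightarrow> nat \<Rightarrow> real ^ 'n \<Rightarrow> real" where
  "Slog g n x = ln (l1 (lprod g n *v x))"

end

(*
  For an allowable matrix A and x, x' in the positive part of the l1 sphere, the quantity
  |ln |A x| - ln |A x'|| is bounded by c(A), the logarithm of the ratio of the largest to the
  smallest column sum of A, and also by 6 d(x, x') as soon as m(x, x') m(x', x) >= 1/3.  In the
  remaining case d(x, x') >= 1/2, so it suffices to dominate c(g_j ... g_1), j <= n, by a random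
  variable whose second moment is bounded uniformly in n.

  By (A1) there are m and e > 0 such that a block of m consecutive factors has entries comparable up
  to the factor e with probability p > 0.  Multiplying by such a block brings c below -2 ln e, and
  c is subadditive.  So c(g_j ... g_1) is at most -2 ln e plus the costs of the blocks up to the
  first comparable one.  The cost of block b counts only if the b preceding blocks all fail, which
  by independence has probability (1 - p)^b, and (A2) gives a finite second moment of the cost of a
  single block.  A Cauchy-Schwarz inequality with geometric weights sums these contributions.
*)
theory Submission
  imports Defs
begin

section \<open>Column sums and the logarithmic condition number\<close>

definition nonneg_mat :: "real^'n^'n \<Rightarrow> bool" where
  "nonneg_mat A \<longleftrightarrow> (\<forall>i j. 0 \<le> A $ i $ j)"

definition colsum :: "real^'n^'n \<Rightarrow> 'n \<Rightarrow> real" where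
  "colsum A j = (\<Sum>i\<in>UNIV. A $ i $ j)"

definition max_colsum :: "real^'n^'n \<Rightarrow> real" where
  "max_colsum A = Max (range (colsum A))"

definition min_colsum :: "real^'n^'n \<Rightarrow> real" where
  "min_colsum A = Min (range (colsum A))"

text \<open>For nonnegative A this is ln (\<parallel>A\<parallel> / \<iota>(A)), by mnorm_eq_max_colsum and iota_eq_min_colsum.\<close>
definition log_cond :: "real^'n^'n \<Rightarrow> real" where
  "log_cond A = ln (max_colsum A) - ln (min_colsum A)"

definition comparable_entries :: "real \<Rightarrow> real^'n^'n \<Rightarrow> bool" where
  "comparable_entries e B \<longleftrightarrow> (\<forall>i j. 0 < B $ i $ j) \<and> (\<forall>i j k l. e * B $ k $ l \<le> B $ i $ j)"

lemma allowable_imp_nonneg_mat: "allowable A \<Longrightarrow> nonneg_mat A"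
  by (simp add: allowable_def nonneg_mat_def)

lemma colsum_nonneg: "nonneg_mat A \<Longrightarrow> 0 \<le> colsum A j"
  unfolding colsum_def nonneg_mat_def by (simp add: sum_nonneg)

lemma colsum_pos:
  assumes "allowable A"
  shows "0 < colsum A j"
proof -
  obtain i where "0 < A $ i $ j" using assms unfolding allowable_def by blast
  then show ?thesis
    unfolding colsum_def using assms by (intro sum_pos2[of UNIV i]) (auto simp: allowable_def)
qed

lemma colsum_le_max_colsum: "colsum A j \<le> max_colsum A"
  unfolding max_colsum_def by (rule Max_ge) auto

lemma min_colsum_le_colsum: "min_colsum A \<le> colsum A j"
  unfolding min_colsum_def by (rule Min_le) auto

lemma max_colsum_attained: "\<exists>j. max_colsum A = colsum A j"
proof -
  have "Max (range (colsum A)) \<in> range (colsum A)" by (rule Max_in) auto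
  then show ?thesis unfolding max_colsum_def by (metis rangeE)
qed

lemma min_colsum_attained: "\<exists>j. min_colsum A = colsum A j"
proof -
  have "Min (range (colsum A)) \<in> range (colsum A)" by (rule Min_in) auto
  then show ?thesis unfolding min_colsum_def by (metis rangeE)
qed

lemma min_colsum_pos: "allowable A \<Longrightarrow> 0 < min_colsum A"
  using min_colsum_attained[of A] colsum_pos by metis

lemma min_colsum_le_max_colsum: "min_colsum A \<le> max_colsum A"
  using min_colsum_le_colsum colsum_le_max_colsum order_trans by metis

lemma log_cond_nonneg: "allowable A \<Longrightarrow> 0 \<le> log_cond A"
  unfolding log_cond_def using min_colsum_pos[of A] min_colsum_le_max_colsum[of A] by simp

lemma pos_sphere_nonneg: "x \<in> pos_sphere \<Longrightarrow> 0 \<le> x $ j"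
  by (simp add: pos_sphere_def)

lemma pos_sphere_sum: "x \<in> pos_sphere \<Longrightarrow> (\<Sum>j\<in>UNIV. x $ j) = 1"
  unfolding pos_sphere_def l1_def by auto

lemma l1_mat_vec:
  assumes "nonneg_mat A" "\<And>j. 0 \<le> x $ j"
  shows "l1 (A *v x) = (\<Sum>j\<in>UNIV. x $ j * colsum A j)"
proof -
  have row_nonneg: "0 \<le> (\<Sum>j\<in>UNIV. A $ i $ j * x $ j)" for i
    using assms by (intro sum_nonneg mult_nonneg_nonneg) (auto simp: nonneg_mat_def)
  have "l1 (A *v x) = (\<Sum>i\<in>UNIV. \<Sum>j\<in>UNIV. A $ i $ j * x $ j)"
    unfolding l1_def matrix_vector_mult_def using row_nonneg by simp
  also have "\<dots> = (\<Sum>j\<in>UNIV. \<Sum>i\<in>UNIV. A $ i $ j * x $ j)"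
    by (rule sum.swap)
  also have "\<dots> = (\<Sum>j\<in>UNIV. x $ j * colsum A j)"
    unfolding colsum_def by (simp add: sum_distrib_left mult.commute)
  finally show ?thesis .
qed

lemma l1_mat_vec_bounds:
  assumes "x \<in> pos_sphere" "nonneg_mat A"
  shows "min_colsum A \<le> l1 (A *v x)" "l1 (A *v x) \<le> max_colsum A"
proof -
  note x = pos_sphere_nonneg[OF assms(1)] pos_sphere_sum[OF assms(1)]
  have "(\<Sum>j\<in>UNIV. x $ j * min_colsum A) \<le> (\<Sum>j\<in>UNIV. x $ j * colsum A j)"
    by (intro sum_mono mult_left_mono min_colsum_le_colsum x)
  then show "min_colsum A \<le> l1 (A *v x)"
    using x by (simp add: l1_mat_vec[OF assms(2)] sum_distrib_right[symmetric])
  have "(\<Sum>j\<in>UNIV. x $ j * colsum A j) \<le> (\<Sum>j\<in>UNIV. x $ j * max_colsum A)"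
    by (intro sum_mono mult_left_mono colsum_le_max_colsum x)
  then show "l1 (A *v x) \<le> max_colsum A"
    using x by (simp add: l1_mat_vec[OF assms(2)] sum_distrib_right[symmetric])
qed

lemma abs_ln_l1_diff_le_log_cond:
  assumes "x \<in> pos_sphere" "x' \<in> pos_sphere" "allowable A"
  shows "\<bar>ln (l1 (A *v x)) - ln (l1 (A *v x'))\<bar> \<le> log_cond A"
proof -
  have A: "nonneg_mat A" "0 < min_colsum A"
    using assms(3) by (auto intro: allowable_imp_nonneg_mat min_colsum_pos)
  note b = l1_mat_vec_bounds[OF assms(1) A(1)] l1_mat_vec_bounds[OF assms(2) A(1)]
  have "ln (min_colsum A) \<le> ln (l1 (A *v x))" "ln (l1 (A *v x)) \<le> ln (max_colsum A)"
       "ln (min_colsum A) \<le> ln (l1 (A *v x'))" "ln (l1 (A *v x')) \<le> ln (max_colsum A)"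
    using b A(2) by auto
  then show ?thesis unfolding log_cond_def by linarith
qed

lemma colsum_mult: "colsum (A ** B) j = (\<Sum>l\<in>UNIV. colsum A l * B $ l $ j)"
proof -
  have "colsum (A ** B) j = (\<Sum>i\<in>UNIV. \<Sum>l\<in>UNIV. A $ i $ l * B $ l $ j)"
    unfolding colsum_def matrix_matrix_mult_def by simp
  also have "\<dots> = (\<Sum>l\<in>UNIV. \<Sum>i\<in>UNIV. A $ i $ l * B $ l $ j)"
    by (rule sum.swap)
  finally show ?thesis
    unfolding colsum_def by (simp add: sum_distrib_right)
qed

lemma allowable_mult:
  assumes A: "allowable A" and B: "allowable B"
  shows "allowable (A ** B)"
  unfolding allowable_def
proof (intro conjI allI)
  fix i j
  show "0 \<le> (A ** B) $ i $ j"
    using A B unfolding allowable_def matrix_matrix_mult_def by (auto intro!: sum_nonneg)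
next
  fix i
  obtain k where "0 < A $ i $ k" using A unfolding allowable_def by blast
  moreover obtain j where "0 < B $ k $ j" using B unfolding allowable_def by blast
  ultimately have "0 < (A ** B) $ i $ j"
    unfolding matrix_matrix_mult_def using A B
    by (auto simp: allowable_def intro!: sum_pos2[of UNIV k])
  then show "\<exists>j. 0 < (A ** B) $ i $ j" by blast
next
  fix j
  obtain k where "0 < B $ k $ j" using B unfolding allowable_def by blast
  moreover obtain i where "0 < A $ i $ k" using A unfolding allowable_def by blast
  ultimately have "0 < (A ** B) $ i $ j"
    unfolding matrix_matrix_mult_def using A B
    by (auto simp: allowable_def intro!: sum_pos2[of UNIV k])
  then show "\<exists>i. 0 < (A ** B) $ i $ j" by blast
qed

lemma allowable_mat_1: "allowable (mat 1 :: real^'n^'n)"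
  unfolding allowable_def mat_def by auto

lemma allowable_lprod: "(\<And>k. k < n \<Longrightarrow> allowable (h k)) \<Longrightarrow> allowable (lprod h n)"
  by (induction n) (auto simp: allowable_mat_1 allowable_mult)

lemma lprod_cong: "(\<And>k. k < n \<Longrightarrow> h k = h' k) \<Longrightarrow> lprod h n = lprod h' n"
  by (induction n) auto

lemma lprod_add: "lprod h (a + b) = lprod (\<lambda>k. h (a + k)) b ** lprod h a"
  by (induction b) (auto simp: matrix_mul_assoc)

lemma max_colsum_mult_le:
  assumes "nonneg_mat A" "nonneg_mat B"
  shows "max_colsum (A ** B) \<le> max_colsum A * max_colsum B"
proof -
  have "0 \<le> max_colsum A"
    using colsum_nonneg[OF assms(1)] colsum_le_max_colsum order_trans by metis
  moreover obtain j where j: "max_colsum (A ** B) = colsum (A ** B) j"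
    using max_colsum_attained by blast
  moreover have "colsum (A ** B) j \<le> (\<Sum>l\<in>UNIV. max_colsum A * B $ l $ j)"
    unfolding colsum_mult using assms(2)
    by (intro sum_mono mult_right_mono colsum_le_max_colsum) (auto simp: nonneg_mat_def)
  moreover have "(\<Sum>l\<in>UNIV. max_colsum A * B $ l $ j) = max_colsum A * colsum B j"
    by (simp add: colsum_def sum_distrib_left)
  ultimately show ?thesis
    using colsum_le_max_colsum[of B j] by (smt (verit) mult_left_mono)
qed

lemma min_colsum_mult_ge:
  assumes "nonneg_mat A" "nonneg_mat B"
  shows "min_colsum A * min_colsum B \<le> min_colsum (A ** B)"
proof -
  have "0 \<le> min_colsum A"
    using min_colsum_attained[of A] colsum_nonneg[OF assms(1)] by metis
  moreover obtain j where j: "min_colsum (A ** B) = colsum (A ** B) j"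
    using min_colsum_attained by blast
  moreover have "(\<Sum>l\<in>UNIV. min_colsum A * B $ l $ j) \<le> colsum (A ** B) j"
    unfolding colsum_mult using assms(2)
    by (intro sum_mono mult_right_mono min_colsum_le_colsum) (auto simp: nonneg_mat_def)
  moreover have "(\<Sum>l\<in>UNIV. min_colsum A * B $ l $ j) = min_colsum A * colsum B j"
    by (simp add: colsum_def sum_distrib_left)
  ultimately show ?thesis
    using min_colsum_le_colsum[of B j] by (smt (verit) mult_left_mono)
qed

lemma log_cond_mult_le:
  assumes "allowable A" "allowable B"
  shows "log_cond (A ** B) \<le> log_cond A + log_cond B"
proof -
  have pos: "0 < min_colsum A" "0 < min_colsum B" "0 < min_colsum (A ** B)"
    using assms by (auto intro: min_colsum_pos allowable_mult)
  then have pos_max: "0 < max_colsum A" "0 < max_colsum B" "0 < max_colsum (A ** B)"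
    using min_colsum_le_max_colsum by (metis less_le_trans)+
  note nonneg = assms[THEN allowable_imp_nonneg_mat]
  have "ln (max_colsum (A ** B)) \<le> ln (max_colsum A * max_colsum B)"
    and "ln (min_colsum A * min_colsum B) \<le> ln (min_colsum (A ** B))"
    using pos pos_max max_colsum_mult_le[OF nonneg] min_colsum_mult_ge[OF nonneg] by simp_all
  with pos pos_max show ?thesis unfolding log_cond_def by (simp add: ln_mult)
qed

lemma log_cond_mat_1: "log_cond (mat 1 :: real^'n^'n) = 0"
proof -
  have "range (colsum (mat 1 :: real^'n^'n)) = {1}"
    unfolding colsum_def mat_def by auto
  then show ?thesis unfolding log_cond_def max_colsum_def min_colsum_def by simp
qed

lemma log_cond_lprod_le:
  "(\<And>k. k < n \<Longrightarrow> allowable (h k)) \<Longrightarrow> log_cond (lprod h n) \<le> (\<Sum>k<n. log_cond (h k))"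
proof (induction n)
  case 0
  then show ?case by (simp add: log_cond_mat_1)
next
  case (Suc n)
  then have "log_cond (lprod h (Suc n)) \<le> log_cond (h n) + log_cond (lprod h n)"
    by (simp add: log_cond_mult_le allowable_lprod)
  then show ?case using Suc by simp
qed

text \<open>Every column sum of H ** B lies between e b S and b S / e, where b is an entry of B and S
  the sum of all column sums of H.\<close>
lemma log_cond_mult_comparable_le:
  fixes B :: "real^'n^'n"
  assumes B: "comparable_entries e B" and e: "0 < e" and H: "allowable H"
  shows "log_cond (H ** B) \<le> - 2 * ln e"
proof -
  fix a :: 'n
  define b where "b = B $ a $ a"
  define S where "S = (\<Sum>k\<in>UNIV. colsum H k)"
  have b: "0 < b" "\<And>k l. e * b \<le> B $ k $ l" "\<And>k l. B $ k $ l \<le> b / e"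
    using B e by (auto simp: comparable_entries_def b_def field_simps)
  have H0: "0 \<le> colsum H k" for k
    using colsum_pos[OF H] less_imp_le by blast
  have S: "0 < S" unfolding S_def using colsum_pos[OF H] by (simp add: sum_pos)
  have "colsum (H ** B) l \<le> b / e * S" for l
    unfolding colsum_mult S_def sum_distrib_left
    by (intro sum_mono) (metis H0 b(3) mult.commute mult_left_mono)
  then have max: "max_colsum (H ** B) \<le> b / e * S"
    using max_colsum_attained by metis
  have "e * b * S \<le> colsum (H ** B) l" for l
    unfolding colsum_mult S_def sum_distrib_left
    by (intro sum_mono) (metis H0 b(2) mult.commute mult_left_mono)
  then have min: "e * b * S \<le> min_colsum (H ** B)"
    using min_colsum_attained by metis
  have pos: "0 < e * b * S" using e b S by simp
  have "ln (max_colsum (H ** B)) \<le> ln (b / e * S)"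
    using max pos min min_colsum_le_max_colsum[of "H ** B"] by (subst ln_le_cancel_iff) auto
  moreover have "ln (e * b * S) \<le> ln (min_colsum (H ** B))"
    using min pos by (subst ln_le_cancel_iff) auto
  ultimately show ?thesis
    unfolding log_cond_def using e b S by (simp add: ln_mult ln_div)
qed

lemma comparable_entries_mono:
  "comparable_entries e B \<Longrightarrow> e' \<le> e \<Longrightarrow> comparable_entries e' B"
  unfolding comparable_entries_def by (meson less_imp_le mult_right_mono order_trans)

lemma strictly_positive_imp_comparable_entries:
  fixes A :: "real^'n^'n"
  assumes "strictly_positive A"
  shows "\<exists>N. comparable_entries (1 / Suc N) A"
proof -
  define E where "E = range (\<lambda>(i, j). A $ i $ j)"
  have E: "finite E" "E \<noteq> {}" unfolding E_def by auto
  have entry: "A $ i $ j \<in> E" for i j unfolding E_def by auto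
  have "Min E \<in> E" using E by (rule Min_in)
  then have pos: "0 < Min E" using assms unfolding E_def strictly_positive_def by auto
  have le: "Min E \<le> A $ i $ j" "A $ i $ j \<le> Max E" for i j
    using E entry by auto
  then have "0 < Max E" using pos by (meson order.strict_trans2)
  moreover have "Min E * A $ k $ l \<le> A $ i $ j * Max E" for i j k l
    using le[of k l] le[of i j] pos by (intro mult_mono) auto
  ultimately have "Min E / Max E * A $ k $ l \<le> A $ i $ j" for i j k l
    by (simp add: field_simps)
  then have "comparable_entries (Min E / Max E) A"
    using assms unfolding comparable_entries_def strictly_positive_def by blast
  moreover obtain N where "inverse (Suc N) < Min E / Max E"
    using pos \<open>0 < Max E\<close> reals_Archimedean by (metis divide_pos_pos)
  ultimately show ?thesis by (metis comparable_entries_mono less_imp_le inverse_eq_divide)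
qed

lemma axis_in_pos_sphere: "(axis j 1 :: real^'n) \<in> pos_sphere"
  unfolding pos_sphere_def l1_def axis_def by (simp add: if_distrib sum.delta cong: if_cong)

lemma l1_mat_vec_axis: "nonneg_mat A \<Longrightarrow> l1 (A *v axis j 1) = colsum A j"
  by (simp add: l1_mat_vec axis_def of_bool_def[symmetric])

lemma mnorm_eq_max_colsum:
  assumes "nonneg_mat A"
  shows "mnorm A = max_colsum A"
proof (rule antisym)
  show "mnorm A \<le> max_colsum A"
    unfolding mnorm_def using axis_in_pos_sphere l1_mat_vec_bounds(2)[OF _ assms]
    by (intro cSUP_least) auto
  have "bdd_above ((\<lambda>x. l1 (A *v x)) ` pos_sphere)"
    using l1_mat_vec_bounds(2)[OF _ assms] by (intro bdd_aboveI2) auto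
  moreover obtain j where "max_colsum A = colsum A j"
    using max_colsum_attained by blast
  ultimately show "max_colsum A \<le> mnorm A"
    unfolding mnorm_def using axis_in_pos_sphere l1_mat_vec_axis[OF assms]
    by (metis cSUP_upper)
qed

lemma iota_eq_min_colsum:
  assumes "nonneg_mat A"
  shows "iota A = min_colsum A"
proof (rule antisym)
  show "min_colsum A \<le> iota A"
    unfolding iota_def using axis_in_pos_sphere l1_mat_vec_bounds(1)[OF _ assms]
    by (intro cINF_greatest) auto
  have "bdd_below ((\<lambda>x. l1 (A *v x)) ` pos_sphere)"
    using l1_mat_vec_bounds(1)[OF _ assms] by (intro bdd_belowI2) auto
  moreover obtain j where "min_colsum A = colsum A j"
    using min_colsum_attained by blast
  ultimately show "iota A \<le> min_colsum A"
    unfolding iota_def using axis_in_pos_sphere l1_mat_vec_axis[OF assms]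
    by (metis cINF_lower)
qed

lemma log_cond_le_ln_NN:
  assumes "allowable A"
  shows "log_cond A \<le> 2 * ln (NN A)" and "0 \<le> ln (NN A)"
proof -
  have NN: "NN A = max (max_colsum A) (1 / min_colsum A)"
    unfolding NN_def using allowable_imp_nonneg_mat[OF assms]
    by (simp add: mnorm_eq_max_colsum iota_eq_min_colsum inverse_eq_divide)
  have pos: "0 < min_colsum A" "min_colsum A \<le> max_colsum A"
    using assms by (auto intro: min_colsum_pos min_colsum_le_max_colsum)
  then have "ln (max_colsum A) \<le> ln (NN A)" "ln (1 / min_colsum A) \<le> ln (NN A)"
    unfolding NN by auto
  then show "log_cond A \<le> 2 * ln (NN A)"
    unfolding log_cond_def using pos by (simp add: ln_div)
  have "1 \<le> NN A"
    unfolding NN using pos by (cases "max_colsum A \<le> 1") (auto simp: le_max_iff_disj le_divide_eq_1)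
  then show "0 \<le> ln (NN A)" by simp
qed

lemma power2_le_one_plus_powr:
  fixes L :: real
  assumes "0 \<le> L" "0 \<le> \<delta>"
  shows "L\<^sup>2 \<le> 1 + L powr (2 + \<delta>)"
proof (cases "L \<le> 1")
  case True
  then show ?thesis using assms by (simp add: power_le_one add_increasing2)
next
  case False
  then have "L\<^sup>2 = L powr 2" by (simp add: powr_realpow)
  also have "\<dots> \<le> L powr (2 + \<delta>)" using False assms by (intro powr_mono) auto
  finally show ?thesis by simp
qed

lemma log_cond_sq_le:
  assumes "allowable A" "0 \<le> \<delta>"
  shows "(log_cond A)\<^sup>2 \<le> 4 * (1 + (ln (NN A)) powr (2 + \<delta>))"
proof -
  have "(log_cond A)\<^sup>2 \<le> (2 * ln (NN A))\<^sup>2"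
    using assms log_cond_nonneg log_cond_le_ln_NN by (intro power_mono) auto
  also have "\<dots> \<le> 4 * (1 + (ln (NN A)) powr (2 + \<delta>))"
    using power2_le_one_plus_powr[OF log_cond_le_ln_NN(2)[OF assms(1)] assms(2)]
    by (simp add: power_mult_distrib)
  finally show ?thesis .
qed

section \<open>The Hilbert metric bound\<close>

lemma pos_sphere_ex_pos: "y \<in> pos_sphere \<Longrightarrow> \<exists>i. 0 < y $ i"
  using pos_sphere_sum[of y] pos_sphere_nonneg[of y]
  by (metis (no_types) antisym not_le sum.neutral zero_neq_one)

lemma mratio_le:
  assumes "y \<in> pos_sphere" "0 < y $ i"
  shows "mratio x y \<le> x $ i / y $ i"
  unfolding mratio_def using assms by (intro Min_le) auto

lemma mratio_nonneg:
  assumes "x \<in> pos_sphere" "y \<in> pos_sphere"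
  shows "0 \<le> mratio x y"
proof -
  have "{x $ i / y $ i | i. 0 < y $ i} = (\<lambda>i. x $ i / y $ i) ` {i. 0 < y $ i}"
    by auto
  moreover obtain i where "0 < y $ i" using pos_sphere_ex_pos[OF assms(2)] by blast
  ultimately show ?thesis
    unfolding mratio_def using assms by (subst Min_ge_iff) (auto simp: pos_sphere_nonneg)
qed

lemma mratio_mult_le:
  assumes "x \<in> pos_sphere" "y \<in> pos_sphere"
  shows "mratio x y * y $ i \<le> x $ i"
proof (cases "0 < y $ i")
  case True
  then show ?thesis using mratio_le[OF assms(2) True, of x] by (simp add: field_simps)
next
  case False
  then show ?thesis using assms pos_sphere_nonneg by (metis antisym not_le mult_zero_right)
qed

lemma mratio_le_1:
  assumes "x \<in> pos_sphere" "y \<in> pos_sphere"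
  shows "mratio x y \<le> 1"
proof -
  have "(\<Sum>i\<in>UNIV. mratio x y * y $ i) \<le> (\<Sum>i\<in>UNIV. x $ i)"
    by (intro sum_mono mratio_mult_le assms)
  then show ?thesis
    using pos_sphere_sum[OF assms(1)] pos_sphere_sum[OF assms(2)]
    by (simp add: sum_distrib_left[symmetric])
qed

lemma mratio_mult_l1_le:
  assumes "x \<in> pos_sphere" "y \<in> pos_sphere" "nonneg_mat A"
  shows "mratio x y * l1 (A *v y) \<le> l1 (A *v x)"
proof -
  have "mratio x y * l1 (A *v y) = (\<Sum>j\<in>UNIV. (mratio x y * y $ j) * colsum A j)"
    using assms by (simp add: l1_mat_vec pos_sphere_nonneg sum_distrib_left mult.assoc)
  also have "\<dots> \<le> (\<Sum>j\<in>UNIV. x $ j * colsum A j)"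
    by (intro sum_mono mult_right_mono mratio_mult_le assms colsum_nonneg)
  also have "\<dots> = l1 (A *v x)"
    using assms by (simp add: l1_mat_vec pos_sphere_nonneg)
  finally show ?thesis .
qed

lemma mratio_prod_bounds:
  assumes "x \<in> pos_sphere" "x' \<in> pos_sphere"
  shows "0 \<le> mratio x x' * mratio x' x" "mratio x x' * mratio x' x \<le> 1"
  using mratio_nonneg[OF assms] mratio_nonneg[OF assms(2,1)]
    mratio_le_1[OF assms] mratio_le_1[OF assms(2,1)] by (simp_all add: mult_le_one)

lemma hdist_nonneg:
  assumes "x \<in> pos_sphere" "x' \<in> pos_sphere"
  shows "0 \<le> hdist x x'"
  unfolding hdist_def using mratio_prod_bounds[OF assms] by simp

lemma hdist_ge_half:
  assumes "x \<in> pos_sphere" "x' \<in> pos_sphere" "mratio x x' * mratio x' x < 1/3"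
  shows "1/2 \<le> hdist x x'"
  unfolding hdist_def using assms(3) mratio_prod_bounds[OF assms(1,2)] by (simp add: field_simps)

lemma abs_ln_l1_diff_le_neg_ln_mratio:
  assumes x: "x \<in> pos_sphere" and x': "x' \<in> pos_sphere" and A: "allowable A"
    and pos: "0 < mratio x x' * mratio x' x"
  shows "\<bar>ln (l1 (A *v x)) - ln (l1 (A *v x'))\<bar> \<le> - ln (mratio x x' * mratio x' x)"
proof -
  have m: "0 < mratio x x'" "0 < mratio x' x"
    using pos mratio_nonneg[OF x x'] mratio_nonneg[OF x' x] by (auto simp: zero_less_mult_iff)
  have A0: "nonneg_mat A" using A by (rule allowable_imp_nonneg_mat)
  have a: "0 < l1 (A *v x)" "0 < l1 (A *v x')"
    using l1_mat_vec_bounds(1)[OF x A0] l1_mat_vec_bounds(1)[OF x' A0] min_colsum_pos[OF A]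
    by linarith+
  have "ln (mratio x x') + ln (l1 (A *v x')) \<le> ln (l1 (A *v x))"
    "ln (mratio x' x) + ln (l1 (A *v x)) \<le> ln (l1 (A *v x'))"
    using mratio_mult_l1_le[OF x x' A0] mratio_mult_l1_le[OF x' x A0] m a
    by (simp_all flip: ln_mult_pos)
  moreover have "ln (mratio x x') \<le> 0" "ln (mratio x' x) \<le> 0"
    using m mratio_le_1[OF x x'] mratio_le_1[OF x' x] by simp_all
  ultimately show ?thesis
    unfolding abs_le_iff ln_mult_pos[OF m] by linarith
qed

lemma neg_ln_le_hdist_bound:
  fixes t :: real
  assumes "1/3 \<le> t" "t \<le> 1"
  shows "- ln t \<le> 6 * ((1 - t) / (1 + t))"
proof -
  have "- ln t = ln (1/t)" using assms by (simp add: ln_div)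
  also have "\<dots> \<le> 1/t - 1" using assms by (intro ln_le_minus_one) auto
  also have "\<dots> \<le> 6 * ((1 - t) / (1 + t))"
  proof -
    have "0 \<le> (1 - t) * (5 * t - 1)"
      using assms by (intro mult_nonneg_nonneg) auto
    with assms show ?thesis by (simp add: field_simps)
  qed
  finally show ?thesis .
qed

lemma abs_ln_l1_diff_le_hdist:
  assumes "x \<in> pos_sphere" "x' \<in> pos_sphere" "allowable A"
    and "1/3 \<le> mratio x x' * mratio x' x"
  shows "\<bar>ln (l1 (A *v x)) - ln (l1 (A *v x'))\<bar> \<le> 6 * hdist x x'"
  using abs_ln_l1_diff_le_neg_ln_mratio[OF assms(1-3)] assms(4)
    neg_ln_le_hdist_bound[OF assms(4) mratio_prod_bounds(2)[OF assms(1,2)]]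
  unfolding hdist_def by simp

section \<open>Resetting at blocks with comparable entries\<close>

lemma sum_blocks:
  fixes f :: "nat \<Rightarrow> 'a::comm_monoid_add"
  shows "(\<Sum>b<B. \<Sum>k<m. f (m * b + k)) = (\<Sum>i<m * B. f i)"
proof -
  have "(\<Sum>k<m. f (m * b + k)) = sum f {b * m..<b * m + m}" for b
    using sum.shift_bounds_nat_ivl[of f 0 "b * m" m]
    by (simp add: atLeast0LessThan add.commute mult.commute)
  then show ?thesis using sum.nat_group[of f m B] by (simp add: mult.commute)
qed

definition block :: "(nat \<Rightarrow> real^'n^'n) \<Rightarrow> nat \<Rightarrow> nat \<Rightarrow> real^'n^'n" where
  "block h m b = lprod (\<lambda>k. h (m * b + k)) m"

definition block_cost :: "(nat \<Rightarrow> real^'n^'n) \<Rightarrow> nat \<Rightarrow> nat \<Rightarrow> real" where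
  "block_cost h m b = (\<Sum>k<m. log_cond (h (m * b + k)))"

text \<open>After the first block with comparable entries, log_cond of a longer product is at most
  -2 ln e plus the sum of log_cond over the factors preceding that block
  (log_cond_lprod_le_reset), so later blocks cost nothing.\<close>
definition pre_reset_cost :: "real \<Rightarrow> (nat \<Rightarrow> real^'n^'n) \<Rightarrow> nat \<Rightarrow> nat \<Rightarrow> real" where
  "pre_reset_cost e h m b =
     (if \<forall>b'<b. \<not> comparable_entries e (block h m b') then block_cost h m b else 0)"

definition reset_bound :: "real \<Rightarrow> (nat \<Rightarrow> real^'n^'n) \<Rightarrow> nat \<Rightarrow> nat \<Rightarrow> real" where
  "reset_bound e h m B = - 2 * ln e + (\<Sum>b<B. pre_reset_cost e h m b)"

lemma pre_reset_cost_nonneg: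
  "(\<And>k. allowable (h k)) \<Longrightarrow> 0 \<le> pre_reset_cost e h m b"
  unfolding pre_reset_cost_def block_cost_def by (auto intro: sum_nonneg log_cond_nonneg)

lemma log_cond_lprod_le_reset:
  assumes al: "\<And>k. allowable (h k)" and e: "0 < e" "e \<le> 1"
    and c: "comparable_entries e (block h m c) \<or> j \<le> m * Suc c"
  shows "log_cond (lprod h j) \<le> - 2 * ln e + (\<Sum>i<m * Suc c. log_cond (h i))"
proof -
  have mono: "(\<Sum>i<a. log_cond (h i)) \<le> (\<Sum>i<b. log_cond (h i))" if "a \<le> b" for a b
    using that al by (intro sum_mono2) (auto intro: log_cond_nonneg)
  have e0: "0 \<le> - 2 * ln e" using e by simp
  show ?thesis
  proof (cases "j \<le> m * Suc c")
    case True
    then show ?thesis using log_cond_lprod_le[of j h] al mono[OF True] e0 by fastforce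
  next
    case False
    then have comp: "comparable_entries e (block h m c)" using c by blast
    define H where "H = lprod (\<lambda>k. h (m * c + m + k)) (j - (m * c + m))"
    have "lprod h j = lprod h ((m * c + m) + (j - (m * c + m)))"
      using False by simp
    also have "\<dots> = (H ** block h m c) ** lprod h (m * c)"
      unfolding lprod_add H_def block_def by (simp add: matrix_mul_assoc)
    finally have "log_cond (lprod h j) \<le> log_cond (H ** block h m c) + log_cond (lprod h (m * c))"
      using al unfolding H_def block_def by (simp add: log_cond_mult_le allowable_mult allowable_lprod)
    also have "\<dots> \<le> - 2 * ln e + (\<Sum>i<m * c. log_cond (h i))"
    proof (rule add_mono)
      show "log_cond (H ** block h m c) \<le> - 2 * ln e"
        using al unfolding H_def by (intro log_cond_mult_comparable_le[OF comp e(1)] allowable_lprod)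
      show "log_cond (lprod h (m * c)) \<le> (\<Sum>i<m * c. log_cond (h i))"
        using al by (simp add: log_cond_lprod_le)
    qed
    also have "\<dots> \<le> - 2 * ln e + (\<Sum>i<m * Suc c. log_cond (h i))"
      using mono[of "m * c" "m * Suc c"] by simp
    finally show ?thesis .
  qed
qed

lemma sum_log_cond_le_sum_pre_reset_cost:
  assumes al: "\<And>k. allowable (h k)" and "c < B"
    and no_reset: "\<forall>b<c. \<not> comparable_entries e (block h m b)"
  shows "(\<Sum>i<m * Suc c. log_cond (h i)) \<le> (\<Sum>b<B. pre_reset_cost e h m b)"
proof -
  have "(\<Sum>i<m * Suc c. log_cond (h i)) = (\<Sum>b<Suc c. pre_reset_cost e h m b)"
    unfolding sum_blocks[symmetric] pre_reset_cost_def block_cost_def using no_reset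
    by (intro sum.cong) auto
  also have "\<dots> \<le> (\<Sum>b<B. pre_reset_cost e h m b)"
    using \<open>c < B\<close> al by (intro sum_mono2 pre_reset_cost_nonneg) auto
  finally show ?thesis .
qed

lemma log_cond_lprod_le_reset_bound:
  assumes al: "\<And>k. allowable (h k)" and e: "0 < e" "e \<le> 1" and j: "j \<le> m * B"
  shows "log_cond (lprod h j) \<le> reset_bound e h m B"
proof (cases B)
  case 0
  then show ?thesis using j e by (simp add: reset_bound_def log_cond_mat_1)
next
  case (Suc B')
  let ?reset = "\<lambda>b. comparable_entries e (block h m b)"
  obtain c where "c < B" "\<forall>b<c. \<not> ?reset b" "?reset c \<or> j \<le> m * Suc c"
  proof (cases "\<exists>b<B. ?reset b")
    case True
    define c where "c = (LEAST b. ?reset b)"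
    have "?reset c" "c < B"
      using True LeastI_ex[of ?reset] Least_le[of ?reset]
      unfolding c_def by (blast, meson order.strict_trans1)
    then show ?thesis using that not_less_Least unfolding c_def by blast
  next
    case False
    then show ?thesis using that[of B'] j Suc by auto
  qed
  then show ?thesis
    using log_cond_lprod_le_reset[OF al e] sum_log_cond_le_sum_pre_reset_cost[OF al]
    unfolding reset_bound_def by (meson add_left_mono order_trans)
qed

lemma abs_Slog_diff_le_reset_bound:
  assumes "\<And>k. allowable (h k)" "x \<in> pos_sphere" "x' \<in> pos_sphere" "0 < e" "e \<le> 1" "j \<le> m * B"
  shows "\<bar>Slog h j x - Slog h j x'\<bar> \<le> reset_bound e h m B"
  unfolding Slog_def using assms
  by (meson abs_ln_l1_diff_le_log_cond allowable_lprod log_cond_lprod_le_reset_bound order_trans)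

lemma abs_Slog_diff_le_hdist:
  assumes "\<And>k. allowable (h k)" "x \<in> pos_sphere" "x' \<in> pos_sphere"
    and "1/3 \<le> mratio x x' * mratio x' x"
  shows "\<bar>Slog h j x - Slog h j x'\<bar> \<le> 6 * hdist x x'"
  unfolding Slog_def using assms by (intro abs_ln_l1_diff_le_hdist allowable_lprod)

lemma abs_Min_diff_le:
  fixes f h :: "'a \<Rightarrow> real"
  assumes "finite S" "S \<noteq> {}" "\<And>j. j \<in> S \<Longrightarrow> \<bar>f j - h j\<bar> \<le> c"
  shows "\<bar>Min (f ` S) - Min (h ` S)\<bar> \<le> c"
proof -
  have "Min (f ` S) \<in> f ` S" "Min (h ` S) \<in> h ` S"
    using assms(1,2) by (intro Min_in; simp)+
  then obtain j1 j2 where j: "j1 \<in> S" "Min (f ` S) = f j1" "j2 \<in> S" "Min (h ` S) = h j2"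
    by blast
  have "Min (f ` S) \<le> f j2" "Min (h ` S) \<le> h j1"
    using assms(1) \<open>j1 \<in> S\<close> \<open>j2 \<in> S\<close> by (intro Min_le; simp)+
  then show ?thesis
    using assms(3)[OF j(1)] assms(3)[OF j(3)] j unfolding abs_le_iff by linarith
qed

section \<open>Measurability\<close>

lemma borel_measurable_matrix_mult[measurable]:
  fixes f g :: "'a \<Rightarrow> real^'n^'n"
  assumes "f \<in> borel_measurable N" "g \<in> borel_measurable N"
  shows "(\<lambda>\<omega>. f \<omega> ** g \<omega>) \<in> borel_measurable N"
proof -
  have "continuous_on UNIV (\<lambda>p::(real^'n^'n) \<times> (real^'n^'n). fst p ** snd p)"
    unfolding matrix_matrix_mult_def by (intro continuous_intros)
  then show ?thesis using assms by (rule borel_measurable_continuous_Pair[rotated 2])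
qed

lemma borel_measurable_lprod[measurable]:
  fixes h :: "nat \<Rightarrow> 'a \<Rightarrow> real^'n^'n"
  shows "(\<And>k. k < n \<Longrightarrow> h k \<in> borel_measurable N) \<Longrightarrow> (\<lambda>\<omega>. lprod (\<lambda>k. h k \<omega>) n) \<in> borel_measurable N"
  by (induction n) auto

lemma borel_measurable_entry[measurable]: "(\<lambda>A::real^'n^'n. A $ i $ j) \<in> borel_measurable borel"
  by (intro borel_measurable_continuous_onI continuous_intros)

lemma borel_measurable_log_cond[measurable]: "(log_cond :: real^'n^'n \<Rightarrow> real) \<in> borel_measurable borel"
  unfolding log_cond_def[abs_def] max_colsum_def min_colsum_def colsum_def
  by (intro borel_measurable_diff borel_measurable_ln borel_measurable_Max borel_measurable_Min
      borel_measurable_continuous_onI continuous_intros) auto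

lemma measurable_comparable_entries[measurable]:
  "Measurable.pred borel (comparable_entries e :: real^'n^'n \<Rightarrow> bool)"
  unfolding comparable_entries_def[abs_def] by measurable

lemma borel_measurable_l1_mat_vec[measurable]:
  "(\<lambda>A::real^'n^'n. l1 (A *v x)) \<in> borel_measurable borel"
  unfolding l1_def matrix_vector_mult_def
  by (intro borel_measurable_continuous_onI continuous_intros)

lemma borel_measurable_Slog[measurable]:
  fixes h :: "nat \<Rightarrow> 'a \<Rightarrow> real^'n^'n"
  assumes "\<And>k. h k \<in> borel_measurable N"
  shows "(\<lambda>\<omega>. Slog (\<lambda>k. h k \<omega>) n x) \<in> borel_measurable N"
  using assms unfolding Slog_def by measurable

section \<open>Probabilistic estimates\<close>

lemma sum_geometric_le:
  fixes r :: real
  assumes "0 \<le> r" "r < 1"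
  shows "(\<Sum>b<n. r ^ b) \<le> 1 / (1 - r)"
  using assms by (simp add: sum_gp_strict divide_right_mono)

lemma power2_sum_le_geometric_weighted:
  fixes a :: "nat \<Rightarrow> real"
  assumes q: "0 < q" "q < 1"
  shows "(\<Sum>b<n. a b)\<^sup>2 \<le> (\<Sum>b<n. (a b)\<^sup>2 / q ^ b) / (1 - q)"
proof -
  have "(\<Sum>b<n. a b)\<^sup>2 = (\<Sum>b<n. sqrt (q ^ b) * (a b / sqrt (q ^ b)))\<^sup>2"
    using q by simp
  also have "\<dots> \<le> (\<Sum>b<n. (sqrt (q ^ b))\<^sup>2) * (\<Sum>b<n. (a b / sqrt (q ^ b))\<^sup>2)"
    by (rule Cauchy_Schwarz_ineq_sum)
  also have "\<dots> = (\<Sum>b<n. q ^ b) * (\<Sum>b<n. (a b)\<^sup>2 / q ^ b)"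
    using q by (simp add: power_divide)
  also have "\<dots> \<le> 1 / (1 - q) * (\<Sum>b<n. (a b)\<^sup>2 / q ^ b)"
  proof (rule mult_right_mono)
    show "(\<Sum>b<n. q ^ b) \<le> 1 / (1 - q)"
      using q by (simp add: sum_gp_strict divide_right_mono)
  qed (use q in \<open>auto intro: sum_nonneg\<close>)
  finally show ?thesis by simp
qed

lemma (in prob_space) indep_vars_reindex:
  assumes "indep_vars M' X I" "inj_on f J" "f ` J \<subseteq> I"
  shows "indep_vars (\<lambda>j. M' (f j)) (\<lambda>j. X (f j)) J"
proof -
  have "indep_vars (\<lambda>j. PiM {f j} M') (\<lambda>j \<omega>. restrict (\<lambda>i. X i \<omega>) {f j}) J"
    using assms by (intro indep_vars_restrict) (auto simp: disjoint_family_on_def inj_on_def)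
  then have "indep_vars (\<lambda>j. M' (f j)) (\<lambda>j \<omega>. restrict (\<lambda>i. X i \<omega>) {f j} (f j)) J"
    by (rule indep_vars_compose2) (auto intro: measurable_component_singleton)
  then show ?thesis by simp
qed

lemma (in prob_space) indep_vars_block_functions:
  fixes X :: "nat \<Rightarrow> 'a \<Rightarrow> 'b"
  assumes indep: "indep_vars (\<lambda>_. N) X UNIV" and m: "0 < m"
    and f: "\<And>b. f b \<in> borel_measurable (PiM {..<m} (\<lambda>_. N))"
  shows "indep_vars (\<lambda>_. borel) (\<lambda>b \<omega>. f b (\<lambda>k\<in>{..<m}. X (m * b + k) \<omega>)) UNIV"
proof -
  define K where "K b = {i. i div m = b}" for b
  have K: "m * b + k \<in> K b" if "k < m" for b k
    using that m by (simp add: K_def)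
  have "indep_vars (\<lambda>b. PiM (K b) (\<lambda>_. N)) (\<lambda>b \<omega>. restrict (\<lambda>i. X i \<omega>) (K b)) UNIV"
    using indep by (intro indep_vars_restrict) (auto simp: K_def disjoint_family_on_def)
  moreover have "(\<lambda>F. f b (\<lambda>k\<in>{..<m}. F (m * b + k))) \<in> borel_measurable (PiM (K b) (\<lambda>_. N))" for b
    using K by (intro measurable_compose[OF _ f] measurable_restrict measurable_component_singleton) auto
  ultimately have "indep_vars (\<lambda>_. borel)
      (\<lambda>b \<omega>. f b (\<lambda>k\<in>{..<m}. restrict (\<lambda>i. X i \<omega>) (K b) (m * b + k))) UNIV"
    by (rule indep_vars_compose2)
  moreover have "(\<lambda>k\<in>{..<m}. restrict (\<lambda>i. X i \<omega>) (K b) (m * b + k)) = (\<lambda>k\<in>{..<m}. X (m * b + k) \<omega>)"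
    for b \<omega> using K by auto
  ultimately show ?thesis by simp
qed

lemma (in prob_space) integral_abs_le_sqrt_integral_sq:
  fixes F :: "'a \<Rightarrow> real"
  assumes "F \<in> borel_measurable M" "integrable M (\<lambda>\<omega>. (F \<omega>)\<^sup>2)"
  shows "integrable M (\<lambda>\<omega>. \<bar>F \<omega>\<bar>)" "(\<integral>\<omega>. \<bar>F \<omega>\<bar> \<partial>M) \<le> sqrt (\<integral>\<omega>. (F \<omega>)\<^sup>2 \<partial>M)"
proof -
  have "(\<lambda>\<omega>. \<bar>F \<omega>\<bar>) \<in> borel_measurable M" "integrable M (\<lambda>\<omega>. \<bar>F \<omega>\<bar>\<^sup>2)"
    using assms by simp_all
  then show int: "integrable M (\<lambda>\<omega>. \<bar>F \<omega>\<bar>)"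
    by (rule square_integrable_imp_integrable)
  have "variance (\<lambda>\<omega>. \<bar>F \<omega>\<bar>) = (\<integral>\<omega>. (F \<omega>)\<^sup>2 \<partial>M) - (\<integral>\<omega>. \<bar>F \<omega>\<bar> \<partial>M)\<^sup>2"
    using variance_eq[of "\<lambda>\<omega>. \<bar>F \<omega>\<bar>"] int assms(2) by simp
  moreover have "0 \<le> variance (\<lambda>\<omega>. \<bar>F \<omega>\<bar>)"
    by (rule variance_positive)
  ultimately show "(\<integral>\<omega>. \<bar>F \<omega>\<bar> \<partial>M) \<le> sqrt (\<integral>\<omega>. (F \<omega>)\<^sup>2 \<partial>M)"
    by (intro real_le_rsqrt) linarith
qed

lemma (in prob_space) sqrt_integral_sq_le:
  fixes F Z :: "'a \<Rightarrow> real"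
  assumes F: "F \<in> borel_measurable M"
    and bound: "AE \<omega> in M. \<bar>F \<omega>\<bar> \<le> Z \<omega> \<and> (P \<longrightarrow> \<bar>F \<omega>\<bar> \<le> a * h)"
    and Z: "integrable M (\<lambda>\<omega>. (Z \<omega>)\<^sup>2)" "(\<integral>\<omega>. (Z \<omega>)\<^sup>2 \<partial>M) \<le> K"
    and h: "0 \<le> a" "0 \<le> h" "0 < b" "\<not> P \<Longrightarrow> b \<le> h"
  shows "integrable M (\<lambda>\<omega>. (F \<omega>)\<^sup>2)" "sqrt (\<integral>\<omega>. (F \<omega>)\<^sup>2 \<partial>M) \<le> (a + sqrt K / b) * h"
proof -
  have square_mono: "u\<^sup>2 \<le> v\<^sup>2" if "\<bar>u\<bar> \<le> v" for u v :: real
    using power_mono[OF that abs_ge_zero, of 2] by simp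
  have sq: "AE \<omega> in M. (F \<omega>)\<^sup>2 \<le> (Z \<omega>)\<^sup>2 \<and> (P \<longrightarrow> (F \<omega>)\<^sup>2 \<le> (a * h)\<^sup>2)"
    using bound by eventually_elim (use square_mono in blast)
  have "AE \<omega> in M. norm ((F \<omega>)\<^sup>2) \<le> norm ((Z \<omega>)\<^sup>2)"
    using sq by eventually_elim simp
  then show int: "integrable M (\<lambda>\<omega>. (F \<omega>)\<^sup>2)"
    using F by (intro Bochner_Integration.integrable_bound[OF Z(1)]) auto
  have "0 \<le> (\<integral>\<omega>. (Z \<omega>)\<^sup>2 \<partial>M)"
    by (rule integral_nonneg_AE) simp
  with Z(2) have K: "0 \<le> K" by linarith
  show "sqrt (\<integral>\<omega>. (F \<omega>)\<^sup>2 \<partial>M) \<le> (a + sqrt K / b) * h"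
  proof (cases P)
    case True
    have "AE \<omega> in M. (F \<omega>)\<^sup>2 \<le> (a * h)\<^sup>2"
      using sq by eventually_elim (use True in blast)
    then have "(\<integral>\<omega>. (F \<omega>)\<^sup>2 \<partial>M) \<le> (\<integral>\<omega>. (a * h)\<^sup>2 \<partial>M)"
      by (rule integral_mono_AE[OF int integrable_const])
    then have "sqrt (\<integral>\<omega>. (F \<omega>)\<^sup>2 \<partial>M) \<le> a * h"
      using h by (intro real_le_lsqrt) (simp_all add: prob_space)
    also have "\<dots> \<le> (a + sqrt K / b) * h"
      using h K by (intro mult_right_mono) simp_all
    finally show ?thesis .
  next
    case False
    have "AE \<omega> in M. (F \<omega>)\<^sup>2 \<le> (Z \<omega>)\<^sup>2"
      using sq by eventually_elim blast
    then have "(\<integral>\<omega>. (F \<omega>)\<^sup>2 \<partial>M) \<le> K"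
      using Z(2) integral_mono_AE[OF int Z(1)] by linarith
    then have "sqrt (\<integral>\<omega>. (F \<omega>)\<^sup>2 \<partial>M) \<le> sqrt K / b * b"
      using h by simp
    also have "\<dots> \<le> (a + sqrt K / b) * h"
      using h(1,3) h(4)[OF False] K by (intro mult_mono) simp_all
    finally show ?thesis .
  qed
qed

definition moments_bounded :: "'a measure \<Rightarrow> ('a \<Rightarrow> real) \<Rightarrow> real \<Rightarrow> bool" where
  "moments_bounded M F r \<longleftrightarrow> integrable M (\<lambda>\<omega>. \<bar>F \<omega>\<bar>) \<and> integrable M (\<lambda>\<omega>. (F \<omega>)\<^sup>2)
     \<and> (\<integral>\<omega>. \<bar>F \<omega>\<bar> \<partial>M) \<le> sqrt (\<integral>\<omega>. (F \<omega>)\<^sup>2 \<partial>M) \<and> sqrt (\<integral>\<omega>. (F \<omega>)\<^sup>2 \<partial>M) \<le> r"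

lemma (in prob_space) moments_bounded_if_dominated:
  fixes F Z :: "'a \<Rightarrow> real"
  assumes F: "F \<in> borel_measurable M"
    and bound: "AE \<omega> in M. \<bar>F \<omega>\<bar> \<le> Z \<omega> \<and> (P \<longrightarrow> \<bar>F \<omega>\<bar> \<le> a * h)"
    and Z: "integrable M (\<lambda>\<omega>. (Z \<omega>)\<^sup>2)" "(\<integral>\<omega>. (Z \<omega>)\<^sup>2 \<partial>M) \<le> K"
    and h: "0 \<le> a" "0 \<le> h" "0 < b" "\<not> P \<Longrightarrow> b \<le> h"
  shows "moments_bounded M F ((a + sqrt K / b) * h)"
  using sqrt_integral_sq_le[OF assms] integral_abs_le_sqrt_integral_sq[OF F]
  unfolding moments_bounded_def by simp

locale iid_matrix_sequence = prob_space M
  for M :: "'w measure" +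
  fixes \<mu> :: "(real^'n^'n) measure" and g :: "nat \<Rightarrow> 'w \<Rightarrow> real^'n^'n"
  assumes indep: "indep_vars (\<lambda>_. borel) g UNIV"
    and law: "\<And>k. distr M borel (g k) = \<mu>"
begin

definition comparable_prob :: "real \<Rightarrow> nat \<Rightarrow> real" where
  "comparable_prob e m = prob {\<omega> \<in> space M. comparable_entries e (lprod (\<lambda>k. g k \<omega>) m)}"

lemma measurable_g[measurable]: "g k \<in> borel_measurable M"
  using indep unfolding indep_vars_def by auto

lemma prob_space_law: "prob_space \<mu>"
  using prob_space_distr[of "g 0" borel] law[of 0] by simp

lemma AE_allowable:
  assumes "AE A in \<mu>. allowable A"
  shows "AE \<omega> in M. \<forall>k. allowable (g k \<omega>)"
  unfolding AE_all_countable
proof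
  fix k
  show "AE \<omega> in M. allowable (g k \<omega>)"
    using assms unfolding law[of k, symmetric] by (rule AE_distrD[OF measurable_g])
qed

lemma distr_block:
  assumes "0 < m"
  shows "distr M (PiM {..<m} (\<lambda>_. borel)) (\<lambda>\<omega>. \<lambda>k\<in>{..<m}. g (s + k) \<omega>) = PiM {..<m} (\<lambda>_. \<mu>)"
proof -
  have "indep_vars (\<lambda>_. borel) (\<lambda>k. g (s + k)) {..<m}"
    using indep_vars_reindex[OF indep, of "\<lambda>k. s + k" "{..<m}"] by (simp add: inj_on_def)
  then show ?thesis
    using assms by (subst (asm) indep_vars_iff_distr_eq_PiM') (auto simp: law)
qed

lemma prob_comparable_shift:
  assumes m: "0 < m"
  shows "prob {\<omega> \<in> space M. comparable_entries e (lprod (\<lambda>k. g (s + k) \<omega>) m)} = comparable_prob e m"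
proof -
  let ?\<Pi> = "PiM {..<m} (\<lambda>_. borel :: (real^'n^'n) measure)"
  let ?C = "{F \<in> space ?\<Pi>. comparable_entries e (lprod F m)}"
  have C: "?C \<in> sets ?\<Pi>" by measurable
  have "prob {\<omega> \<in> space M. comparable_entries e (lprod (\<lambda>k. g (s + k) \<omega>) m)}
      = measure (PiM {..<m} (\<lambda>_. \<mu>)) ?C" for s
  proof -
    let ?X = "\<lambda>\<omega>. \<lambda>k\<in>{..<m}. g (s + k) \<omega>"
    have X: "?X \<in> measurable M ?\<Pi>" by (intro measurable_restrict) auto
    have "lprod (?X \<omega>) m = lprod (\<lambda>k. g (s + k) \<omega>) m" for \<omega>
      by (rule lprod_cong) auto
    then have "?X -` ?C \<inter> space M = {\<omega> \<in> space M. comparable_entries e (lprod (\<lambda>k. g (s + k) \<omega>) m)}"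
      by (auto simp: space_PiM)
    then show ?thesis
      using measure_distr[OF X C] distr_block[OF m, of s] by simp
  qed
  from this[of s] this[of 0] show ?thesis
    unfolding comparable_prob_def by simp
qed

lemma integrable_log_cond_sq:
  assumes allow: "AE A in \<mu>. allowable A"
    and moment: "integrable \<mu> (\<lambda>A. (ln (NN A)) powr (2 + \<delta>))" and "0 \<le> \<delta>"
  shows "integrable \<mu> (\<lambda>A. (log_cond A)\<^sup>2)"
proof (rule Bochner_Integration.integrable_bound)
  interpret law: prob_space \<mu> by (rule prob_space_law)
  show "integrable \<mu> (\<lambda>A. 4 * (1 + (ln (NN A)) powr (2 + \<delta>)))"
    using moment by simp
  have "sets \<mu> = sets borel" using law[of 0] by auto
  then show "(\<lambda>A. (log_cond A)\<^sup>2) \<in> borel_measurable \<mu>"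
    using measurable_cong_sets by fastforce
  show "AE A in \<mu>. norm ((log_cond A)\<^sup>2) \<le> norm (4 * (1 + (ln (NN A)) powr (2 + \<delta>)))"
    using allow by eventually_elim (use log_cond_sq_le \<open>0 \<le> \<delta>\<close> in simp)
qed

lemma
  assumes W: "integrable \<mu> (\<lambda>A. (log_cond A)\<^sup>2)"
  shows integrable_block_cost_sq: "integrable M (\<lambda>\<omega>. (block_cost (\<lambda>k. g k \<omega>) m b)\<^sup>2)"
    and integral_block_cost_sq_le:
      "(\<integral>\<omega>. (block_cost (\<lambda>k. g k \<omega>) m b)\<^sup>2 \<partial>M) \<le> (real m)\<^sup>2 * (\<integral>A. (log_cond A)\<^sup>2 \<partial>\<mu>)"
proof -
  have Wg: "integrable M (\<lambda>\<omega>. (log_cond (g i \<omega>))\<^sup>2)"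
    "(\<integral>\<omega>. (log_cond (g i \<omega>))\<^sup>2 \<partial>M) = (\<integral>A. (log_cond A)\<^sup>2 \<partial>\<mu>)" for i
    using W unfolding law[of i, symmetric] by (simp_all add: integrable_distr_eq integral_distr)
  define R where "R \<omega> = real m * (\<Sum>k<m. (log_cond (g (m * b + k) \<omega>))\<^sup>2)" for \<omega>
  have CS: "(block_cost (\<lambda>k. g k \<omega>) m b)\<^sup>2 \<le> R \<omega>" for \<omega>
    using sum_squared_le_sum_of_squares[of "\<lambda>k. log_cond (g (m * b + k) \<omega>)" "{..<m}"]
    unfolding block_cost_def R_def by (simp add: mult.commute)
  have R: "integrable M R" unfolding R_def using Wg by auto
  show int: "integrable M (\<lambda>\<omega>. (block_cost (\<lambda>k. g k \<omega>) m b)\<^sup>2)"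
    using CS unfolding block_cost_def
    by (intro Bochner_Integration.integrable_bound[OF R]) (auto intro!: AE_I2 order_trans[OF _ abs_ge_self])
  have "(\<integral>\<omega>. (block_cost (\<lambda>k. g k \<omega>) m b)\<^sup>2 \<partial>M) \<le> (\<integral>\<omega>. R \<omega> \<partial>M)"
    using CS by (intro integral_mono int R)
  also have "\<dots> = (real m)\<^sup>2 * (\<integral>A. (log_cond A)\<^sup>2 \<partial>\<mu>)"
    unfolding R_def using Wg by (simp add: power2_eq_square)
  finally show "(\<integral>\<omega>. (block_cost (\<lambda>k. g k \<omega>) m b)\<^sup>2 \<partial>M) \<le> (real m)\<^sup>2 * (\<integral>A. (log_cond A)\<^sup>2 \<partial>\<mu>)" .
qed

lemma
  assumes m: "0 < m" and W: "integrable \<mu> (\<lambda>A. (log_cond A)\<^sup>2)"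
  shows integrable_pre_reset_cost_sq: "integrable M (\<lambda>\<omega>. (pre_reset_cost e (\<lambda>k. g k \<omega>) m b)\<^sup>2)"
    and integral_pre_reset_cost_sq_le: "(\<integral>\<omega>. (pre_reset_cost e (\<lambda>k. g k \<omega>) m b)\<^sup>2 \<partial>M)
      \<le> (1 - comparable_prob e m) ^ b * ((real m)\<^sup>2 * (\<integral>A. (log_cond A)\<^sup>2 \<partial>\<mu>))"
proof -
  define f where "f b' F = (if b' < b then of_bool (\<not> comparable_entries e (lprod F m))
      else (\<Sum>k<m. log_cond (F k))\<^sup>2)" for b' and F :: "nat \<Rightarrow> real^'n^'n"
  define V where "V b' \<omega> = f b' (\<lambda>k\<in>{..<m}. g (m * b' + k) \<omega>)" for b' \<omega>
  have "f b' \<in> borel_measurable (PiM {..<m} (\<lambda>_. borel))" for b'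
    unfolding f_def by measurable
  then have indep_V: "indep_vars (\<lambda>_. borel) V UNIV"
    unfolding V_def by (rule indep_vars_block_functions[OF indep m])
  have V_block: "V b' \<omega> = (if b' < b then of_bool (\<not> comparable_entries e (block (\<lambda>k. g k \<omega>) m b'))
      else (block_cost (\<lambda>k. g k \<omega>) m b')\<^sup>2)" for b' \<omega>
  proof -
    have "lprod (\<lambda>k\<in>{..<m}. g (m * b' + k) \<omega>) m = block (\<lambda>k. g k \<omega>) m b'"
      unfolding block_def by (rule lprod_cong) simp
    then show ?thesis unfolding V_def f_def block_cost_def by simp
  qed
  have sq_eq: "(pre_reset_cost e (\<lambda>k. g k \<omega>) m b)\<^sup>2 = (\<Prod>b'\<in>{..b}. V b' \<omega>)" for \<omega>
    unfolding pre_reset_cost_def V_block lessThan_Suc_atMost[symmetric] prod.lessThan_Suc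
    by (auto simp: prod.neutral prod_zero_iff)
  have integrable_V: "integrable M (V b')" for b'
  proof (cases "b' < b")
    case True
    have "Measurable.pred M (\<lambda>\<omega>. comparable_entries e (block (\<lambda>k. g k \<omega>) m b'))"
      unfolding block_def by measurable
    then show ?thesis
      using True unfolding V_block by (intro integrable_const_bound[where B=1]) auto
  next
    case False
    then show ?thesis unfolding V_block using integrable_block_cost_sq[OF W] by simp
  qed
  have expectation_V: "(\<integral>\<omega>. V b' \<omega> \<partial>M) = 1 - comparable_prob e m" if "b' < b" for b'
  proof -
    define C where "C = {\<omega> \<in> space M. comparable_entries e (block (\<lambda>k. g k \<omega>) m b')}"
    have C: "C \<in> sets M"
      unfolding C_def block_def by measurable
    have "(\<integral>\<omega>. V b' \<omega> \<partial>M) = (\<integral>\<omega>. indicator (space M - C) \<omega> \<partial>M)"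
      using that by (intro Bochner_Integration.integral_cong) (auto simp: V_block C_def split: split_indicator)
    also have "\<dots> = 1 - prob C"
      using C by (simp add: prob_compl)
    also have "prob C = comparable_prob e m"
      unfolding C_def block_def using prob_comparable_shift[OF m] by simp
    finally show ?thesis .
  qed
  have "(\<integral>\<omega>. (pre_reset_cost e (\<lambda>k. g k \<omega>) m b)\<^sup>2 \<partial>M) = (\<Prod>b'\<in>{..b}. \<integral>\<omega>. V b' \<omega> \<partial>M)"
    unfolding sq_eq using indep_V integrable_V
    by (intro indep_vars_lebesgue_integral) (auto intro: indep_vars_subset)
  also have "\<dots> = (1 - comparable_prob e m) ^ b * (\<integral>\<omega>. (block_cost (\<lambda>k. g k \<omega>) m b)\<^sup>2 \<partial>M)"
    unfolding lessThan_Suc_atMost[symmetric] prod.lessThan_Suc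
    using V_block[of b] by (simp add: expectation_V cong: Bochner_Integration.integral_cong)
  also have "\<dots> \<le> (1 - comparable_prob e m) ^ b * ((real m)\<^sup>2 * (\<integral>A. (log_cond A)\<^sup>2 \<partial>\<mu>))"
    unfolding comparable_prob_def by (intro mult_left_mono integral_block_cost_sq_le[OF W]) simp
  finally show "(\<integral>\<omega>. (pre_reset_cost e (\<lambda>k. g k \<omega>) m b)\<^sup>2 \<partial>M)
      \<le> (1 - comparable_prob e m) ^ b * ((real m)\<^sup>2 * (\<integral>A. (log_cond A)\<^sup>2 \<partial>\<mu>))" .
  show "integrable M (\<lambda>\<omega>. (pre_reset_cost e (\<lambda>k. g k \<omega>) m b)\<^sup>2)"
    unfolding sq_eq using indep_V integrable_V
    by (intro indep_vars_integrable) (auto intro: indep_vars_subset)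
qed

lemma reset_bound_sq_bounded:
  assumes m: "0 < m" and e: "0 < e" and p: "0 < comparable_prob e m"
    and W: "integrable \<mu> (\<lambda>A. (log_cond A)\<^sup>2)"
  obtains K where "0 \<le> K"
    and "\<And>n. integrable M (\<lambda>\<omega>. (reset_bound e (\<lambda>k. g k \<omega>) m n)\<^sup>2)"
    and "\<And>n. (\<integral>\<omega>. (reset_bound e (\<lambda>k. g k \<omega>) m n)\<^sup>2 \<partial>M) \<le> K"
proof -
  define p where "p = comparable_prob e m"
  define q where "q = 1 - p / 2"
  define r where "r = (1 - p) / q"
  define C where "C = (real m)\<^sup>2 * (\<integral>A. (log_cond A)\<^sup>2 \<partial>\<mu>)"
  define K where "K = 2 * (2 * ln e)\<^sup>2 + 2 * (1 / (1 - r) * C / (1 - q))"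
  have "p \<le> 1" unfolding p_def comparable_prob_def by simp
  then have q: "0 < q" "q < 1" and r: "0 \<le> r" "r < 1"
    using p unfolding p_def q_def r_def by (auto simp: field_simps)
  have C: "0 \<le> C" unfolding C_def by simp
  let ?Z = "\<lambda>n \<omega>. reset_bound e (\<lambda>k. g k \<omega>) m n"
  let ?a = "\<lambda>b \<omega>. pre_reset_cost e (\<lambda>k. g k \<omega>) m b"
  have bound: "integrable M (\<lambda>\<omega>. (?Z n \<omega>)\<^sup>2) \<and> (\<integral>\<omega>. (?Z n \<omega>)\<^sup>2 \<partial>M) \<le> K" for n
  proof
    define R where "R \<omega> = 2 * (2 * ln e)\<^sup>2 + 2 * ((\<Sum>b<n. (?a b \<omega>)\<^sup>2 / q ^ b) / (1 - q))" for \<omega>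
    have pointwise: "(?Z n \<omega>)\<^sup>2 \<le> R \<omega>" for \<omega>
    proof -
      define S where "S = (\<Sum>b<n. ?a b \<omega>)"
      have "(?Z n \<omega>)\<^sup>2 \<le> 2 * (2 * ln e)\<^sup>2 + 2 * S\<^sup>2"
        unfolding reset_bound_def S_def[symmetric] using zero_le_power2[of "- 2 * ln e - S"]
        by (simp add: power2_eq_square algebra_simps)
      also have "S\<^sup>2 \<le> (\<Sum>b<n. (?a b \<omega>)\<^sup>2 / q ^ b) / (1 - q)"
        unfolding S_def by (rule power2_sum_le_geometric_weighted[OF q])
      finally show ?thesis unfolding R_def by simp
    qed
    have R: "integrable M R"
      unfolding R_def using integrable_pre_reset_cost_sq[OF m W] by auto
    have "(\<lambda>\<omega>. ?Z n \<omega>) \<in> borel_measurable M"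
      unfolding reset_bound_def pre_reset_cost_def block_cost_def block_def by measurable
    then show int: "integrable M (\<lambda>\<omega>. (?Z n \<omega>)\<^sup>2)"
      using pointwise by (intro Bochner_Integration.integrable_bound[OF R]) (auto intro!: AE_I2 order_trans[OF _ abs_ge_self])
    have "(\<integral>\<omega>. (?Z n \<omega>)\<^sup>2 \<partial>M) \<le> (\<integral>\<omega>. R \<omega> \<partial>M)"
      using pointwise by (intro integral_mono int R)
    also have "\<dots> = 2 * (2 * ln e)\<^sup>2 + 2 * ((\<Sum>b<n. (\<integral>\<omega>. (?a b \<omega>)\<^sup>2 \<partial>M) / q ^ b) / (1 - q))"
      unfolding R_def using integrable_pre_reset_cost_sq[OF m W] by (simp add: prob_space)
    also have "(\<Sum>b<n. (\<integral>\<omega>. (?a b \<omega>)\<^sup>2 \<partial>M) / q ^ b) \<le> (\<Sum>b<n. r ^ b * C)"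
    proof (rule sum_mono)
      fix b
      have "(\<integral>\<omega>. (?a b \<omega>)\<^sup>2 \<partial>M) / q ^ b \<le> (1 - p) ^ b * C / q ^ b"
        using integral_pre_reset_cost_sq_le[OF m W, of e b] q
        unfolding p_def C_def by (intro divide_right_mono) auto
      then show "(\<integral>\<omega>. (?a b \<omega>)\<^sup>2 \<partial>M) / q ^ b \<le> r ^ b * C"
        by (simp add: r_def power_divide)
    qed
    also have "(\<Sum>b<n. r ^ b * C) \<le> 1 / (1 - r) * C"
      unfolding sum_distrib_right[symmetric] using r C by (intro mult_right_mono sum_geometric_le)
    finally show "(\<integral>\<omega>. (?Z n \<omega>)\<^sup>2 \<partial>M) \<le> K"
      unfolding K_def using q by (simp add: divide_right_mono)
  qed
  have "0 \<le> K" unfolding K_def using q r C by simp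
  with bound show ?thesis using that by blast
qed

lemma exists_comparable_block:
  assumes "0 < prob {\<omega> \<in> space M. \<exists>n\<ge>1. strictly_positive (lprod (\<lambda>k. g k \<omega>) n)}"
  obtains m e where "0 < m" "0 < e" "e \<le> 1" "0 < comparable_prob e m"
proof -
  have "\<exists>n\<ge>1. \<exists>N. 0 < comparable_prob (1 / Suc N) n"
  proof (rule ccontr)
    assume "\<not> ?thesis"
    then have "comparable_prob (1 / Suc N) n = 0" if "1 \<le> n" for n N
      using that measure_nonneg[of M] unfolding comparable_prob_def by (meson not_less order_antisym)
    moreover have "Measurable.pred M (\<lambda>\<omega>. comparable_entries (1 / Suc N) (lprod (\<lambda>k. g k \<omega>) n))"
      for n N by measurable
    ultimately have "AE \<omega> in M. \<not> comparable_entries (1 / Suc N) (lprod (\<lambda>k. g k \<omega>) n)"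
      if "1 \<le> n" for n N
      using that unfolding comparable_prob_def by (subst (asm) prob_eq_0) (auto simp: pred_def elim!: AE_mp)
    then have "AE \<omega> in M. \<forall>n N. 1 \<le> n \<longrightarrow> \<not> comparable_entries (1 / Suc N) (lprod (\<lambda>k. g k \<omega>) n)"
      by (simp add: AE_all_countable)
    then have "AE \<omega> in M. \<not> (\<exists>n\<ge>1. strictly_positive (lprod (\<lambda>k. g k \<omega>) n))"
      by eventually_elim (use strictly_positive_imp_comparable_entries in blast)
    then show False
      using assms prob_eq_0_AE by simp
  qed
  then obtain n N where "1 \<le> n" "0 < comparable_prob (1 / Suc N) n"
    by blast
  then show thesis
    using that[of n "1 / Suc N"] by simp
qed

lemma moments_bounded_Slog_diff:
  assumes allow: "AE A in \<mu>. allowable A" and m: "0 < m" and e: "0 < e" "e \<le> 1"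
    and K: "\<And>n. integrable M (\<lambda>\<omega>. (reset_bound e (\<lambda>k. g k \<omega>) m n)\<^sup>2)"
      "\<And>n. (\<integral>\<omega>. (reset_bound e (\<lambda>k. g k \<omega>) m n)\<^sup>2 \<partial>M) \<le> K"
    and x: "x \<in> pos_sphere" and x': "x' \<in> pos_sphere" and n: "1 \<le> n"
  shows "moments_bounded M (\<lambda>\<omega>. Slog (\<lambda>k. g k \<omega>) n x - Slog (\<lambda>k. g k \<omega>) n x')
      ((6 + 2 * sqrt K) * hdist x x')"
    and "moments_bounded M (\<lambda>\<omega>. Min ((\<lambda>j. Slog (\<lambda>k. g k \<omega>) j x) ` {1..n})
        - Min ((\<lambda>j. Slog (\<lambda>k. g k \<omega>) j x') ` {1..n})) ((6 + 2 * sqrt K) * hdist x x')"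
proof -
  let ?S = "\<lambda>j y \<omega>. Slog (\<lambda>k. g k \<omega>) j y"
  let ?close = "1/3 \<le> mratio x x' * mratio x' x"
  have moments: "moments_bounded M F ((6 + 2 * sqrt K) * hdist x x')"
    if "F \<in> borel_measurable M"
      and "AE \<omega> in M. \<bar>F \<omega>\<bar> \<le> reset_bound e (\<lambda>k. g k \<omega>) m n \<and> (?close \<longrightarrow> \<bar>F \<omega>\<bar> \<le> 6 * hdist x x')"
    for F
    using moments_bounded_if_dominated[OF that K, where b="1/2"]
      hdist_nonneg[OF x x'] hdist_ge_half[OF x x']
    by (simp add: mult.commute)
  have bound: "AE \<omega> in M. \<forall>j\<le>n. \<bar>?S j x \<omega> - ?S j x' \<omega>\<bar> \<le> reset_bound e (\<lambda>k. g k \<omega>) m n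
      \<and> (?close \<longrightarrow> \<bar>?S j x \<omega> - ?S j x' \<omega>\<bar> \<le> 6 * hdist x x')"
    using AE_allowable[OF allow]
  proof eventually_elim
    case (elim \<omega>)
    have "j \<le> m * n" if "j \<le> n" for j using that m by (simp add: order_trans)
    then show ?case
      using elim x x' e by (blast intro: abs_Slog_diff_le_reset_bound abs_Slog_diff_le_hdist)
  qed
  show "moments_bounded M (\<lambda>\<omega>. ?S n x \<omega> - ?S n x' \<omega>) ((6 + 2 * sqrt K) * hdist x x')"
  proof (rule moments)
    show "(\<lambda>\<omega>. ?S n x \<omega> - ?S n x' \<omega>) \<in> borel_measurable M" by measurable
    show "AE \<omega> in M. \<bar>?S n x \<omega> - ?S n x' \<omega>\<bar> \<le> reset_bound e (\<lambda>k. g k \<omega>) m n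
        \<and> (?close \<longrightarrow> \<bar>?S n x \<omega> - ?S n x' \<omega>\<bar> \<le> 6 * hdist x x')"
      using bound by eventually_elim blast
  qed
  show "moments_bounded M (\<lambda>\<omega>. Min ((\<lambda>j. ?S j x \<omega>) ` {1..n}) - Min ((\<lambda>j. ?S j x' \<omega>) ` {1..n}))
      ((6 + 2 * sqrt K) * hdist x x')"
  proof (rule moments)
    show "(\<lambda>\<omega>. Min ((\<lambda>j. ?S j x \<omega>) ` {1..n}) - Min ((\<lambda>j. ?S j x' \<omega>) ` {1..n}))
        \<in> borel_measurable M"
      by (simp add: borel_measurable_Min)
    show "AE \<omega> in M. \<bar>Min ((\<lambda>j. ?S j x \<omega>) ` {1..n}) - Min ((\<lambda>j. ?S j x' \<omega>) ` {1..n})\<bar>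
          \<le> reset_bound e (\<lambda>k. g k \<omega>) m n
        \<and> (?close \<longrightarrow> \<bar>Min ((\<lambda>j. ?S j x \<omega>) ` {1..n}) - Min ((\<lambda>j. ?S j x' \<omega>) ` {1..n})\<bar>
          \<le> 6 * hdist x x')"
      using bound by eventually_elim (use n in \<open>auto intro!: abs_Min_diff_le\<close>)
  qed
qed

end

theorem lemma2p7:
  fixes M :: "'w measure"
    and \<mu> :: "(real ^ 'n ^ 'n) measure"
    and g :: "nat \<Rightarrow> 'w \<Rightarrow> real ^ 'n ^ 'n"
  assumes dim: "CARD('n) \<ge> 2"
    and P: "prob_space M"
    and indep: "prob_space.indep_vars M (\<lambda>_. borel) g UNIV"
    and law: "\<And>k. distr M borel (g k) = \<mu>"
    and allow: "AE A in \<mu>. allowable A"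
    and A1: "measure M {\<omega> \<in> space M. \<exists>n\<ge>1. strictly_positive (lprod (\<lambda>k. g k \<omega>) n)} > 0"
    and A2: "\<exists>\<delta>>0. integrable \<mu> (\<lambda>A. (ln (NN A)) powr (2 + \<delta>))"
  shows "\<exists>c>0. \<forall>x\<in>pos_sphere. \<forall>x'\<in>pos_sphere. \<forall>n\<ge>1.
     (let D = (\<lambda>\<omega>. Slog (\<lambda>k. g k \<omega>) n x - Slog (\<lambda>k. g k \<omega>) n x');
          E = (\<lambda>\<omega>. Min ((\<lambda>j. Slog (\<lambda>k. g k \<omega>) j x) ` {1..n})
                  - Min ((\<lambda>j. Slog (\<lambda>k. g k \<omega>) j x') ` {1..n}))
      in integrable M (\<lambda>\<omega>. \<bar>D \<omega>\<bar>) \<and> integrable M (\<lambda>\<omega>. (D \<omega>)\<^sup>2)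
       \<and> (\<integral>\<omega>. \<bar>D \<omega>\<bar> \<partial>M) \<le> sqrt (\<integral>\<omega>. (D \<omega>)\<^sup>2 \<partial>M)
       \<and> sqrt (\<integral>\<omega>. (D \<omega>)\<^sup>2 \<partial>M) \<le> c * hdist x x'
       \<and> integrable M (\<lambda>\<omega>. \<bar>E \<omega>\<bar>) \<and> integrable M (\<lambda>\<omega>. (E \<omega>)\<^sup>2)
       \<and> (\<integral>\<omega>. \<bar>E \<omega>\<bar> \<partial>M) \<le> sqrt (\<integral>\<omega>. (E \<omega>)\<^sup>2 \<partial>M)
       \<and> sqrt (\<integral>\<omega>. (E \<omega>)\<^sup>2 \<partial>M) \<le> c * hdist x x')"
proof -
  interpret iid_matrix_sequence M \<mu> g
    using P indep law by (simp add: iid_matrix_sequence_def iid_matrix_sequence_axioms_def)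
  obtain m e where m: "0 < m" and e: "0 < e" "e \<le> 1" and p: "0 < comparable_prob e m"
    using exists_comparable_block A1 by blast
  obtain \<delta> where "0 < \<delta>" "integrable \<mu> (\<lambda>A. (ln (NN A)) powr (2 + \<delta>))"
    using A2 by blast
  then have "integrable \<mu> (\<lambda>A. (log_cond A)\<^sup>2)"
    by (intro integrable_log_cond_sq[OF allow]) auto
  then obtain K where K: "0 \<le> K"
    "\<And>n. integrable M (\<lambda>\<omega>. (reset_bound e (\<lambda>k. g k \<omega>) m n)\<^sup>2)"
    "\<And>n. (\<integral>\<omega>. (reset_bound e (\<lambda>k. g k \<omega>) m n)\<^sup>2 \<partial>M) \<le> K"
    using reset_bound_sq_bounded[OF m e(1) p] by blast
  have "0 < 6 + 2 * sqrt K"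
    using K(1) by (intro add_pos_nonneg) auto
  with moments_bounded_Slog_diff[OF allow m e K(2,3)] show ?thesis
    unfolding Let_def moments_bounded_def by blast
qed

end
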